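(* Let $a=\{a_1,\ldots,a_n\}$ be a list of positive integers and for $\epsilon\in\mathbb{R}$ let $$q^h_{a,\epsilon}(x):=\sum_i x_i^4+\Big(\big(\sum_i a_ix_i\big)^2-2\sum_i x_i^2\Big)\Big(\frac1n\sum_i x_i^2\Big)+(n-\epsilon)\Big(\frac1n\sum_i x_i^2\Big)^2 .$$ Then the linear program $\max_{\epsilon\in\mathbb{R}}\{\epsilon : q^h_{a,\epsilon} \text{ is dsos}\}$ is feasible, i.e., there exists $\epsilon\in\mathbb{R}$ such that $q^h_{a,\epsilon}$ is dsos.
   Context: Let $z(x,2)$ be the vector of all monomials of degree exactly $2$ in $x=(x_1,\ldots,x_n)$. A quartic form $p$ is dsos (diagonally-dominant-sum-of-squares) if $p(x)=z(x,2)^TQz(x,2)$ for some symmetric diagonally dominant matrix $Q$, where a symmetric matrix $Q$ is diagonally dominant if $q_{ii}\ge\sum_{j\ne i}|q_{ij}|$ for all $i$. *)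

theory Defs
  imports Main Complex_Main
begin

definition deg2_monos :: "nat \<Rightarrow> (nat \<times> nat) set" where
  "deg2_monos n = {(i, j). i \<le> j \<and> j < n}"

definition deg2_mono :: "(nat \<Rightarrow> real) \<Rightarrow> nat \<times> nat \<Rightarrow> real" where
  "deg2_mono x u = x (fst u) * x (snd u)"

definition symmetric_on :: "'b set \<Rightarrow> ('b \<Rightarrow> 'b \<Rightarrow> real) \<Rightarrow> bool" where
  "symmetric_on S Q \<longleftrightarrow> (\<forall>u\<in>S. \<forall>v\<in>S. Q u v = Q v u)"

definition diag_dominant_on :: "'b set \<Rightarrow> ('b \<Rightarrow> 'b \<Rightarrow> real) \<Rightarrow> bool" where
  "diag_dominant_on S Q \<longleftrightarrow> (\<forall>u\<in>S. Q u u \<ge> (\<Sum>v\<in>S - {u}. \<bar>Q u v\<bar>))"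

definition dsos :: "nat \<Rightarrow> ((nat \<Rightarrow> real) \<Rightarrow> real) \<Rightarrow> bool" where
  "dsos n p \<longleftrightarrow> (\<exists>Q. symmetric_on (deg2_monos n) Q \<and> diag_dominant_on (deg2_monos n) Q \<and>
     (\<forall>x. p x = (\<Sum>u\<in>deg2_monos n. \<Sum>v\<in>deg2_monos n. deg2_mono x u * Q u v * deg2_mono x v)))"

definition qh :: "nat list \<Rightarrow> real \<Rightarrow> (nat \<Rightarrow> real) \<Rightarrow> real" where
  "qh a eps x = (let n = length a; s2 = (\<Sum>i<n. (x i)^2) / real n in
     (\<Sum>i<n. (x i)^4)
     + ((\<Sum>i<n. real (a ! i) * x i)^2 - 2 * (\<Sum>i<n. (x i)^2)) * s2
     + (real n - eps) * s2^2)"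

end

theory Submission
  imports Defs
begin

text \<open>Every term of \<open>q\<^sup>h\<close> except the multiple of \<open>(\<Sum>x\<^sub>i\<^sup>2)\<^sup>2\<close> has an explicit symmetric
  Gram matrix: a diagonal one for \<open>\<Sum>x\<^sub>i\<^sup>4\<close> and a symmetrised rank-two one for the product of
  the quadratic forms \<open>(\<Sum>a\<^sub>ix\<^sub>i)\<^sup>2\<close> and \<open>\<Sum>x\<^sub>i\<^sup>2\<close>. The form \<open>(\<Sum>x\<^sub>i\<^sup>2)\<^sup>2\<close> itself has a diagonal
  Gram matrix with all diagonal entries at least 1, so adding a large enough multiple of it
  makes any Gram matrix diagonally dominant; choosing \<open>\<epsilon>\<close> very negative provides that
  multiple.\<close>

definition gram_form :: "nat \<Rightarrow> (nat \<times> nat \<Rightarrow> nat \<times> nat \<Rightarrow> real) \<Rightarrow> (nat \<Rightarrow> real) \<Rightarrow> real" where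
  "gram_form n Q x =
     (\<Sum>u\<in>deg2_monos n. \<Sum>v\<in>deg2_monos n. deg2_mono x u * Q u v * deg2_mono x v)"

definition diag_gram :: "(nat \<times> nat \<Rightarrow> real) \<Rightarrow> nat \<times> nat \<Rightarrow> nat \<times> nat \<Rightarrow> real" where
  "diag_gram d u v = (if v = u then d u else 0)"

definition sym_product_gram ::
    "(nat \<times> nat \<Rightarrow> real) \<Rightarrow> (nat \<times> nat \<Rightarrow> real) \<Rightarrow> nat \<times> nat \<Rightarrow> nat \<times> nat \<Rightarrow> real" where
  "sym_product_gram g h u v = (g u * h v + g v * h u) / 2"

text \<open>Coefficient of the monomial \<open>x\<^sub>ix\<^sub>j\<close> (\<open>i \<le> j\<close>) in \<open>\<Sum>\<^sub>i\<^sub>,\<^sub>j c i j x\<^sub>ix\<^sub>j\<close>.\<close>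
definition pair_coeff :: "(nat \<Rightarrow> nat \<Rightarrow> real) \<Rightarrow> nat \<times> nat \<Rightarrow> real" where
  "pair_coeff c u = (if fst u = snd u then c (fst u) (fst u) else c (fst u) (snd u) + c (snd u) (fst u))"

lemma deg2_monos_Suc: "deg2_monos (Suc n) = deg2_monos n \<union> (\<lambda>i. (i, n)) ` {..n}"
  by (auto simp: deg2_monos_def less_Suc_eq)

lemma finite_deg2_monos [simp]: "finite (deg2_monos n)"
proof -
  have "deg2_monos n \<subseteq> {..<n} \<times> {..<n}" by (auto simp: deg2_monos_def)
  then show ?thesis by (rule finite_subset) auto
qed

lemma double_sum_eq_sum_deg2_monos:
  "(\<Sum>i<n. \<Sum>j<n. h i j) = (\<Sum>u\<in>deg2_monos n. pair_coeff h u)"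
proof (induction n)
  case 0
  then show ?case by (simp add: deg2_monos_def)
next
  case (Suc n)
  have disjoint: "deg2_monos n \<inter> (\<lambda>i. (i, n)) ` {..n} = {}"
    by (auto simp: deg2_monos_def)
  have "(\<Sum>u\<in>deg2_monos (Suc n). pair_coeff h u)
      = (\<Sum>u\<in>deg2_monos n. pair_coeff h u) + (\<Sum>u\<in>(\<lambda>i. (i, n)) ` {..n}. pair_coeff h u)"
    unfolding deg2_monos_Suc by (rule sum.union_disjoint) (auto simp: disjoint)
  also have "(\<Sum>u\<in>(\<lambda>i. (i, n)) ` {..n}. pair_coeff h u) = (\<Sum>i<Suc n. pair_coeff h (i, n))"
    by (subst sum.reindex) (auto simp: inj_on_def lessThan_Suc_atMost)
  also have "\<dots> = (\<Sum>i<n. h i n + h n i) + h n n"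
    by (simp add: pair_coeff_def)
  finally show ?case
    using Suc by (simp add: sum.lessThan_Suc sum.distrib algebra_simps)
qed

lemma quadratic_form_eq_sum_deg2_monos:
  "(\<Sum>i<n. \<Sum>j<n. c i j * x i * x j) = (\<Sum>u\<in>deg2_monos n. pair_coeff c u * deg2_mono x u)"
  by (subst double_sum_eq_sum_deg2_monos, rule sum.cong)
     (auto simp: pair_coeff_def deg2_mono_def algebra_simps)

lemma gram_form_linear:
  "gram_form n (\<lambda>u v. P u v + c * Q u v) x = gram_form n P x + c * gram_form n Q x"
  unfolding gram_form_def by (simp add: algebra_simps sum.distrib sum_distrib_left)

lemma gram_form_diag_gram:
  "gram_form n (diag_gram d) x = (\<Sum>u\<in>deg2_monos n. d u * (deg2_mono x u)\<^sup>2)"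
  unfolding gram_form_def
proof (rule sum.cong)
  fix u assume u: "u \<in> deg2_monos n"
  have "(\<Sum>v\<in>deg2_monos n. deg2_mono x u * diag_gram d u v * deg2_mono x v)
      = (\<Sum>v\<in>deg2_monos n. if v = u then deg2_mono x u * d u * deg2_mono x v else 0)"
    by (rule sum.cong) (auto simp: diag_gram_def)
  with u show "(\<Sum>v\<in>deg2_monos n. deg2_mono x u * diag_gram d u v * deg2_mono x v)
      = d u * (deg2_mono x u)\<^sup>2"
    by (simp add: sum.delta' power2_eq_square)
qed simp

lemma gram_form_diag_pair_coeff:
  "gram_form n (diag_gram (pair_coeff c)) x = (\<Sum>i<n. \<Sum>j<n. c i j * (x i * x j)\<^sup>2)"
  unfolding gram_form_diag_gram
  by (subst double_sum_eq_sum_deg2_monos, rule sum.cong)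
     (auto simp: pair_coeff_def deg2_mono_def algebra_simps)

lemma gram_form_square_norm:
  "gram_form n (diag_gram (pair_coeff (\<lambda>_ _. 1))) x = (\<Sum>i<n. (x i)\<^sup>2)\<^sup>2"
  unfolding gram_form_diag_pair_coeff
  by (simp add: power2_eq_square[of "sum _ _"] sum_product power_mult_distrib)

lemma gram_form_sym_product_gram:
  "gram_form n (sym_product_gram g h) x
     = (\<Sum>u\<in>deg2_monos n. g u * deg2_mono x u) * (\<Sum>v\<in>deg2_monos n. h v * deg2_mono x v)"
proof -
  let ?M = "deg2_monos n" and ?z = "deg2_mono x"
  have swap: "(\<Sum>u\<in>?M. \<Sum>v\<in>?M. ?z u * (g v * h u) * ?z v) = (\<Sum>u\<in>?M. \<Sum>v\<in>?M. ?z u * (g u * h v) * ?z v)"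
    by (rule trans[OF sum.swap]) (simp add: mult_ac)
  have "gram_form n (sym_product_gram g h) x
      = ((\<Sum>u\<in>?M. \<Sum>v\<in>?M. ?z u * (g u * h v) * ?z v) + (\<Sum>u\<in>?M. \<Sum>v\<in>?M. ?z u * (g v * h u) * ?z v)) / 2"
    unfolding gram_form_def sym_product_gram_def
    by (simp add: sum.distrib sum_divide_distrib algebra_simps add_divide_distrib)
  also have "\<dots> = (\<Sum>u\<in>?M. \<Sum>v\<in>?M. ?z u * (g u * h v) * ?z v)"
    using swap by simp
  also have "\<dots> = (\<Sum>u\<in>?M. g u * ?z u) * (\<Sum>v\<in>?M. h v * ?z v)"
    unfolding sum_product by (intro sum.cong refl) (simp add: mult_ac)
  finally show ?thesis .
qed

lemma diag_dominant_on_add_scaled_diag: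
  fixes F D :: "'b \<Rightarrow> 'b \<Rightarrow> real"
  assumes "finite S"
    and diag: "\<And>u. u \<in> S \<Longrightarrow> D u u \<ge> 1"
    and off_diag: "\<And>u v. u \<in> S \<Longrightarrow> v \<in> S \<Longrightarrow> u \<noteq> v \<Longrightarrow> D u v = 0"
    and large: "C \<ge> (\<Sum>u\<in>S. \<Sum>v\<in>S. \<bar>F u v\<bar>)"
  shows "diag_dominant_on S (\<lambda>u v. F u v + C * D u v)"
  unfolding diag_dominant_on_def
proof
  fix u assume u: "u \<in> S"
  have "(\<Sum>v\<in>S - {u}. \<bar>F u v + C * D u v\<bar>) = (\<Sum>v\<in>S - {u}. \<bar>F u v\<bar>)"
    using u by (intro sum.cong) (auto simp: off_diag)
  moreover have "\<bar>F u u\<bar> + (\<Sum>v\<in>S - {u}. \<bar>F u v\<bar>) = (\<Sum>v\<in>S. \<bar>F u v\<bar>)"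
    using \<open>finite S\<close> u by (rule sum.remove[symmetric])
  moreover have "(\<Sum>v\<in>S. \<bar>F u v\<bar>) \<le> C"
    using \<open>finite S\<close> u large
    by (meson member_le_sum order_trans sum_nonneg abs_ge_zero)
  moreover have "C \<le> C * D u u"
  proof -
    have "0 \<le> C" using large by (meson order_trans sum_nonneg abs_ge_zero)
    then show ?thesis using diag[OF u] by (simp add: mult_le_cancel_left1)
  qed
  ultimately show "(\<Sum>v\<in>S - {u}. \<bar>F u v + C * D u v\<bar>) \<le> F u u + C * D u u"
    by linarith
qed

lemma dsos_add_multiple_square_norm:
  assumes "symmetric_on (deg2_monos n) F"
  shows "\<exists>C. dsos n (\<lambda>x. gram_form n F x + C * (\<Sum>i<n. (x i)\<^sup>2)\<^sup>2)"
proof -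
  define D where "D = diag_gram (pair_coeff (\<lambda>_ _. 1))"
  define C where "C = (\<Sum>u\<in>deg2_monos n. \<Sum>v\<in>deg2_monos n. \<bar>F u v\<bar>)"
  have "symmetric_on (deg2_monos n) (\<lambda>u v. F u v + C * D u v)"
    using assms by (simp add: symmetric_on_def D_def diag_gram_def)
  moreover have "diag_dominant_on (deg2_monos n) (\<lambda>u v. F u v + C * D u v)"
    by (rule diag_dominant_on_add_scaled_diag)
       (auto simp: C_def D_def diag_gram_def pair_coeff_def)
  moreover have "gram_form n (\<lambda>u v. F u v + C * D u v) x
      = gram_form n F x + C * (\<Sum>i<n. (x i)\<^sup>2)\<^sup>2" for x
    unfolding gram_form_linear D_def gram_form_square_norm ..
  ultimately show ?thesis
    unfolding dsos_def gram_form_def[symmetric]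
    by (intro exI[of _ C] exI[of _ "\<lambda>u v. F u v + C * D u v"]) simp
qed

lemma sum_squares_eq_sum_deg2_monos:
  "(\<Sum>i<n. (x i)\<^sup>2) = (\<Sum>u\<in>deg2_monos n. pair_coeff (\<lambda>i j. if i = j then 1 else 0) u * deg2_mono x u)"
  unfolding quadratic_form_eq_sum_deg2_monos[symmetric]
  by (simp add: power2_eq_square if_distrib if_distribR cong: if_cong)

lemma square_linear_form_eq_sum_deg2_monos:
  "(\<Sum>i<n. c i * x i)\<^sup>2 = (\<Sum>u\<in>deg2_monos n. pair_coeff (\<lambda>i j. c i * c j) u * deg2_mono x u)"
  unfolding quadratic_form_eq_sum_deg2_monos[symmetric]
  by (simp add: power2_eq_square sum_product mult_ac)

lemma gram_form_sum_fourth_powers: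
  "gram_form n (diag_gram (pair_coeff (\<lambda>i j. if i = j then 1 else 0))) x = (\<Sum>i<n. (x i)^4)"
  by (simp add: gram_form_diag_pair_coeff if_distrib if_distribR power_mult_distrib
      flip: power_add cong: if_cong)

lemma qh_eq_gram_part_plus_square_norm:
  fixes a :: "nat list"
  defines "n \<equiv> length a"
  shows "qh a (real n - real n ^ 2 * (c + 2 / real n)) x
    = (\<Sum>i<n. (x i)^4) + (\<Sum>i<n. real (a ! i) * x i)\<^sup>2 * (\<Sum>i<n. (x i)\<^sup>2) / real n
      + c * (\<Sum>i<n. (x i)\<^sup>2)\<^sup>2"
proof (cases "n = 0")
  case True
  then show ?thesis by (simp add: qh_def n_def)
next
  case False
  have "P + (L - 2 * S) * (S / real n) + (real n - (real n - real n ^ 2 * (c + 2 / real n))) * (S / real n)\<^sup>2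
      = P + L * S / real n + c * S\<^sup>2" for P L S :: real
    using False by (simp add: field_simps power2_eq_square)
  then show ?thesis
    unfolding qh_def Let_def n_def .
qed

theorem theorem5p4:
  fixes a :: "nat list"
  assumes "\<forall>i < length a. a ! i > 0"
  shows "\<exists>eps :: real. dsos (length a) (qh a eps)"
proof -
  define n where "n = length a"
  define S where "S = pair_coeff (\<lambda>i j. if i = j then 1 else 0)"
  define L where "L = pair_coeff (\<lambda>i j. real (a ! i) * real (a ! j))"
  define F where "F = (\<lambda>u v. diag_gram S u v + (1 / real n) * sym_product_gram L S u v)"
  have "symmetric_on (deg2_monos n) F"
    by (simp add: symmetric_on_def F_def diag_gram_def sym_product_gram_def)
  then obtain C where dsos_C: "dsos n (\<lambda>x. gram_form n F x + C * (\<Sum>i<n. (x i)\<^sup>2)\<^sup>2)"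
    using dsos_add_multiple_square_norm by blast
  have gram_F: "gram_form n F x
      = (\<Sum>i<n. (x i)^4) + (\<Sum>i<n. real (a ! i) * x i)\<^sup>2 * (\<Sum>i<n. (x i)\<^sup>2) / real n" for x
    unfolding F_def gram_form_linear gram_form_sym_product_gram S_def L_def
      gram_form_sum_fourth_powers sum_squares_eq_sum_deg2_monos square_linear_form_eq_sum_deg2_monos
    by simp
  have "qh a (real n - real n ^ 2 * (C + 2 / real n))
      = (\<lambda>x. gram_form n F x + C * (\<Sum>i<n. (x i)\<^sup>2)\<^sup>2)"
    unfolding gram_F unfolding n_def by (rule ext, rule qh_eq_gram_part_plus_square_norm)
  with dsos_C have "dsos n (qh a (real n - real n ^ 2 * (C + 2 / real n)))"
    by simp
  then show ?thesis
    unfolding n_def ..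
qed

end
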